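(* The functions $D,d:\mathbb{C}^{n\times r}\times\mathbb{C}^{n\times r}\to\mathbb{R}$ defined by $D(x,y)=\min_{U\in U(r)}\|x-yU\|_2$ and $d(x,y)=\min_{U\in U(r)}\|x-yU\|_2\|x+yU\|_2$ descend to metrics on $\mathbb{C}^{n\times r}/U(r)$.
   Context: $\|\cdot\|_2$ is the Frobenius norm, $U(r)$ the unitary group. $\mathbb{C}^{n\times r}/U(r)$ is the set of classes under $x\sim y$ iff $x=yU$ for some $U\in U(r)$. Equivalently $D(x,y)=\sqrt{\|x\|_2^2+\|y\|_2^2-2\|x^*y\|_1}$ and $d(x,y)=\sqrt{(\|x\|_2^2+\|y\|_2^2)^2-4\|x^*y\|_1^2}$, $\|\cdot\|_1$ the nuclear norm. *)

theory Defs
  imports "HOL-Analysis.Analysis"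
begin

text \<open>Complex n x r matrices are rendered as complex^'r^'n (rows indexed by 'n,
  columns by 'r); the dimensions n, r are arbitrary finite index types.\<close>

definition cadj :: "complex^'c^'b \<Rightarrow> complex^'b^'c" where
  "cadj A = (\<chi> i j. cnj (A $ j $ i))"

definition unitary_mat :: "complex^'r^'r \<Rightarrow> bool" where
  "unitary_mat U \<longleftrightarrow> U ** cadj U = mat 1 \<and> cadj U ** U = mat 1"

definition frob :: "complex^'c^'b \<Rightarrow> real" where
  "frob A = sqrt (\<Sum>i\<in>UNIV. \<Sum>j\<in>UNIV. (cmod (A $ i $ j))\<^sup>2)"

definition uequiv :: "complex^'r^'n \<Rightarrow> complex^'r^'n \<Rightarrow> bool" where
  "uequiv x y \<longleftrightarrow> (\<exists>U. unitary_mat U \<and> x = y ** U)"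

definition distD :: "complex^'r^'n \<Rightarrow> complex^'r^'n \<Rightarrow> real" where
  "distD x y = Inf {frob (x - y ** U) | U. unitary_mat U}"

definition distd :: "complex^'r^'n \<Rightarrow> complex^'r^'n \<Rightarrow> real" where
  "distd x y = Inf {frob (x - y ** U) * frob (x + y ** U) | U. unitary_mat U}"

definition descends_to_metric :: "(complex^'r^'n \<Rightarrow> complex^'r^'n \<Rightarrow> real) \<Rightarrow> bool" where
  "descends_to_metric f \<longleftrightarrow>
     (\<forall>x x' y y'. uequiv x x' \<and> uequiv y y' \<longrightarrow> f x y = f x' y') \<and>
     (\<forall>x y. f x y \<ge> 0) \<and>
     (\<forall>x y. f x y = 0 \<longleftrightarrow> uequiv x y) \<and>
     (\<forall>x y. f x y = f y x) \<and>
     (\<forall>x y z. f x z \<le> f x y + f y z)"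

end

theory Submission
  imports Defs
begin

text \<open>Both functions are infima, over the compact group U(r), of a continuous cost
  f(x, yU), where f(a, b) = \<parallel>a - b\<parallel> resp. \<parallel>a - b\<parallel> \<parallel>a + b\<parallel>.  Each cost is a pseudometric
  that is invariant under simultaneous right multiplication by unitaries and vanishes only
  on pairs in the same orbit; these properties alone make the infimum attained,
  orbit-invariant, symmetric and subadditive, with zeros exactly on the orbits.

  The one nontrivial point is the triangle inequality for \<parallel>a - c\<parallel> \<parallel>a + c\<parallel>.  For a
  Householder reflection H the form q(v) = \<langle>Hv, v\<rangle> satisfies
  q(u) - q(v) = \<langle>H(u - v), u + v\<rangle> \<le> \<parallel>u - v\<parallel> \<parallel>u + v\<parallel>, with equality when H maps the
  direction of a - c to that of a + c.  For that H,
  \<parallel>a - c\<parallel> \<parallel>a + c\<parallel> = (q(a) - q(b)) + (q(b) - q(c)) \<le> \<parallel>a - b\<parallel> \<parallel>a + b\<parallel> + \<parallel>b - c\<parallel> \<parallel>b + c\<parallel>.\<close>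

definition householder :: "'a::real_inner \<Rightarrow> 'a \<Rightarrow> 'a" where
  "householder w s = s - (2 * inner s w) *\<^sub>R w"

definition householder_form :: "'a::real_inner \<Rightarrow> 'a \<Rightarrow> real" where
  "householder_form w v = inner (householder w v) v"

lemma householder_scaleR: "householder w (c *\<^sub>R s) = c *\<^sub>R householder w s"
  by (simp add: householder_def algebra_simps)

lemma householder_form_diff:
  "householder_form w u - householder_form w v = inner (householder w (u - v)) (u + v)"
  unfolding householder_form_def householder_def
  by (simp add: inner_commute power2_eq_square algebra_simps)

lemma norm_householder:
  assumes "norm w = 1 \<or> w = 0"
  shows "norm (householder w s) = norm s"
proof -
  have "(norm (householder w s))\<^sup>2 = (norm s)\<^sup>2 + 4 * (inner s w)\<^sup>2 * ((norm w)\<^sup>2 - 1)"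
    unfolding householder_def power2_norm_eq_inner
    by (simp add: inner_commute power2_eq_square algebra_simps)
  with assms show ?thesis
    by (auto intro: power2_eq_imp_eq)
qed

lemma householder_maps_unit:
  assumes "norm p = 1" "norm q = 1"
  obtains w where "norm w = 1 \<or> w = 0" "householder w p = q"
proof (cases "p = q")
  case True
  then show ?thesis by (intro that[of 0]) (auto simp: householder_def)
next
  case False
  define w where "w = sgn (p - q)"
  have "inner p p = 1" "inner q q = 1"
    using assms by (simp_all add: power2_norm_eq_inner[symmetric])
  then have "2 * inner p (p - q) = (norm (p - q))\<^sup>2"
    by (simp add: power2_norm_eq_inner inner_diff_left inner_diff_right inner_commute)
  moreover have "inner p w = inner p (p - q) / norm (p - q)"
    unfolding w_def sgn_div_norm inner_scaleR_right by (simp add: field_simps)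
  ultimately have "2 * inner p w / norm (p - q) = 1"
    using False by (simp add: power2_eq_square)
  then have "(2 * inner p w) *\<^sub>R w = p - q"
    by (simp add: w_def sgn_div_norm)
  then have "householder w p = q"
    by (simp add: householder_def)
  moreover have "norm w = 1" using False by (simp add: w_def norm_sgn)
  ultimately show ?thesis using that by blast
qed

lemma householder_form_diff_le:
  assumes "norm w = 1 \<or> w = 0"
  shows "householder_form w u - householder_form w v \<le> norm (u - v) * norm (u + v)"
  using Cauchy_Schwarz_ineq2[THEN abs_le_D1, of "householder w (u - v)" "u + v"]
  by (simp add: householder_form_diff norm_householder[OF assms])

lemma householder_form_diff_attains:
  fixes u v :: "'a::real_inner"
  assumes "u - v \<noteq> 0" "u + v \<noteq> 0"
  obtains w where "norm w = 1 \<or> w = 0"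
    "householder_form w u - householder_form w v = norm (u - v) * norm (u + v)"
proof -
  obtain w where w: "norm w = 1 \<or> w = 0" "householder w (sgn (u - v)) = sgn (u + v)"
    using householder_maps_unit[of "sgn (u - v)" "sgn (u + v)"] assms by (auto simp: norm_sgn)
  have "householder w (u - v) = norm (u - v) *\<^sub>R sgn (u + v)"
    using w(2) householder_scaleR[of w "norm (u - v)" "sgn (u - v)"] assms(1)
    by (simp add: sgn_div_norm)
  then have "householder_form w u - householder_form w v = norm (u - v) * norm (u + v)"
    using assms(2) by (simp add: householder_form_diff sgn_div_norm power2_norm_eq_inner[symmetric] power2_eq_square)
  with w(1) show ?thesis using that by blast
qed

lemma norm_diff_mult_norm_add_triangle:
  fixes a b c :: "'a::real_inner"
  shows "norm (a - c) * norm (a + c) \<le> norm (a - b) * norm (a + b) + norm (b - c) * norm (b + c)"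
proof (cases "a - c = 0 \<or> a + c = 0")
  case True
  then show ?thesis by auto
next
  case False
  then obtain w where w: "norm w = 1 \<or> w = 0"
    and eq: "householder_form w a - householder_form w c = norm (a - c) * norm (a + c)"
    using householder_form_diff_attains by blast
  show ?thesis
    using eq householder_form_diff_le[OF w, of a b] householder_form_diff_le[OF w, of b c] by linarith
qed

lemma frob_eq_norm: "frob A = norm A"
  unfolding frob_def norm_vec_def L2_set_def
  by (simp add: sum_nonneg)

lemma cadj_matrix_mul: "cadj (A ** B) = cadj B ** cadj A"
  by (simp add: cadj_def matrix_matrix_mult_def vec_eq_iff mult.commute)

lemma cadj_cadj [simp]: "cadj (cadj A) = A"
  by (simp add: cadj_def vec_eq_iff)

lemma cadj_mat [simp]: "cadj (mat c) = mat (cnj c)"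
  by (simp add: cadj_def vec_eq_iff mat_def)

lemma cadj_uminus: "cadj (- A) = - cadj A"
  by (simp add: cadj_def vec_eq_iff)

lemma matrix_add_rdistrib: "(A + B) ** C = A ** C + B ** C"
  by (simp add: matrix_matrix_mult_def vec_eq_iff sum.distrib distrib_right)

lemma matrix_diff_rdistrib: "(A - B) ** (C :: 'a::ring_1^_^_) = A ** C - B ** C"
  by (simp add: matrix_matrix_mult_def vec_eq_iff sum_subtractf left_diff_distrib)

lemma matrix_mul_neg_mat_1: "A ** (- mat 1) = - (A :: 'a::ring_1^_^_)"
  by (simp add: matrix_matrix_mult_def mat_def vec_eq_iff if_distrib cong: if_cong)

lemma unitary_mat_mat_1: "unitary_mat (mat 1)"
  by (simp add: unitary_mat_def)

lemma unitary_mat_neg_mat_1: "unitary_mat (- mat 1)"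
  by (simp add: unitary_mat_def cadj_uminus matrix_mul_neg_mat_1)

lemma unitary_mat_mult: "unitary_mat U \<Longrightarrow> unitary_mat V \<Longrightarrow> unitary_mat (U ** V)"
  unfolding unitary_mat_def cadj_matrix_mul
  by (metis matrix_mul_assoc matrix_mul_rid)

lemma unitary_mat_cadj: "unitary_mat U \<Longrightarrow> unitary_mat (cadj U)"
  unfolding unitary_mat_def by simp

lemma matrix_mul_unitary_cadj: "unitary_mat U \<Longrightarrow> A ** U ** cadj U = A"
  unfolding unitary_mat_def by (simp flip: matrix_mul_assoc)

lemma norm_power2_eq_trace: "(norm A)\<^sup>2 = Re (\<Sum>i\<in>UNIV. (A ** cadj A) $ i $ i)"
proof -
  have "(norm A)\<^sup>2 = (\<Sum>i\<in>UNIV. \<Sum>j\<in>UNIV. (cmod (A $ i $ j))\<^sup>2)"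
    unfolding frob_eq_norm[symmetric] frob_def by (simp add: sum_nonneg)
  also have "\<dots> = Re (\<Sum>i\<in>UNIV. (A ** cadj A) $ i $ i)"
    by (simp add: matrix_matrix_mult_def cadj_def complex_mult_cnj cmod_power2)
  finally show ?thesis .
qed

lemma norm_matrix_mul_unitary:
  assumes "unitary_mat U"
  shows "norm (A ** U) = norm A"
proof -
  have "(A ** U) ** cadj (A ** U) = A ** cadj A"
    using assms unfolding cadj_matrix_mul unitary_mat_def
    by (metis matrix_mul_assoc matrix_mul_rid)
  then have "(norm (A ** U))\<^sup>2 = (norm A)\<^sup>2"
    by (simp add: norm_power2_eq_trace)
  then show ?thesis
    by (auto intro: power2_eq_imp_eq)
qed

lemma compact_unitary_mat: "compact {U :: complex^'r^'r. unitary_mat U}"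
  unfolding compact_eq_bounded_closed
proof
  have "{U :: complex^'r^'r. unitary_mat U} \<subseteq> cball 0 (sqrt CARD('r))"
  proof
    fix U :: "complex^'r^'r"
    assume "U \<in> {U. unitary_mat U}"
    then have "(norm U)\<^sup>2 = CARD('r)"
      by (simp add: unitary_mat_def norm_power2_eq_trace mat_def)
    then show "U \<in> cball 0 (sqrt CARD('r))"
      by (simp add: real_le_rsqrt)
  qed
  then show "bounded {U :: complex^'r^'r. unitary_mat U}"
    using bounded_cball bounded_subset by blast
  have "continuous_on UNIV (\<lambda>U :: complex^'r^'r. U ** cadj U)"
       "continuous_on UNIV (\<lambda>U :: complex^'r^'r. cadj U ** U)"
    unfolding matrix_matrix_mult_def cadj_def by (intro continuous_intros)+
  then have "closed ({U. U ** cadj U = mat 1} \<inter> {U :: complex^'r^'r. cadj U ** U = mat 1})"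
    by (intro closed_Int closed_Collect_eq continuous_on_const) auto
  then show "closed {U :: complex^'r^'r. unitary_mat U}"
    by (simp add: unitary_mat_def Collect_conj_eq)
qed

definition orbit_dist ::
    "(complex^'r^'n \<Rightarrow> complex^'r^'n \<Rightarrow> real) \<Rightarrow> complex^'r^'n \<Rightarrow> complex^'r^'n \<Rightarrow> real" where
  "orbit_dist f x y = Inf {f x (y ** U) | U. unitary_mat U}"

locale unitarily_invariant_pseudometric =
  fixes f :: "complex^'r^'n \<Rightarrow> complex^'r^'n \<Rightarrow> real"
  assumes continuous: "continuous_on UNIV (f a)"
    and refl: "f a a = 0"
    and commute: "f a b = f b a"
    and triangle: "f a c \<le> f a b + f b c"
    and unitary_invariant: "unitary_mat P \<Longrightarrow> f (a ** P) (b ** P) = f a b"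
    and eq_0_imp_uequiv: "f a b = 0 \<Longrightarrow> uequiv a b"
      \<comment> \<open>rather than \<open>a = b\<close>: the cost of d also vanishes at \<open>b = - a\<close>\<close>
begin

lemma nonneg: "0 \<le> f a b"
  using triangle[where a = a and b = b and c = a] refl[of a] commute[of a b] by linarith

lemma orbit_dist_le: "unitary_mat U \<Longrightarrow> orbit_dist f x y \<le> f x (y ** U)"
  unfolding orbit_dist_def by (intro cInf_lower bdd_belowI[where m = 0]) (auto simp: nonneg)

lemma orbit_dist_attained:
  obtains U where "unitary_mat U" "orbit_dist f x y = f x (y ** U)"
proof -
  have "continuous_on UNIV (\<lambda>U. y ** U)"
    unfolding matrix_matrix_mult_def by (intro continuous_intros)
  then have "continuous_on {U. unitary_mat U} (\<lambda>U. f x (y ** U))"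
    by (rule continuous_on_compose2[OF continuous continuous_on_subset]) auto
  then obtain U where U: "unitary_mat U" "\<And>V. unitary_mat V \<Longrightarrow> f x (y ** U) \<le> f x (y ** V)"
    using continuous_attains_inf[OF compact_unitary_mat] unitary_mat_mat_1 by blast
  then have "orbit_dist f x y = f x (y ** U)"
    unfolding orbit_dist_def by (intro cInf_eq_minimum) auto
  with U(1) show ?thesis using that by blast
qed

lemma orbit_dist_nonneg: "0 \<le> orbit_dist f x y"
  by (metis orbit_dist_attained nonneg)

lemma orbit_dist_right_unitary:
  assumes "unitary_mat P" "unitary_mat Q"
  shows "orbit_dist f (x ** P) (y ** Q) = orbit_dist f x y"
proof -
  have le: "orbit_dist f (x ** P) (y ** Q) \<le> orbit_dist f x y"
    if "unitary_mat P" "unitary_mat Q" for x y P Q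
  proof -
    obtain U where U: "unitary_mat U" "orbit_dist f x y = f x (y ** U)"
      using orbit_dist_attained .
    have "(y ** Q) ** (cadj Q ** U ** P) = (y ** U) ** P"
      using that by (simp add: matrix_mul_assoc matrix_mul_unitary_cadj)
    then have "f (x ** P) ((y ** Q) ** (cadj Q ** U ** P)) = orbit_dist f x y"
      using U that by (simp add: unitary_invariant)
    moreover have "unitary_mat (cadj Q ** U ** P)"
      using that U by (intro unitary_mat_mult unitary_mat_cadj)
    ultimately show ?thesis
      by (metis orbit_dist_le)
  qed
  have "orbit_dist f x y = orbit_dist f (x ** P ** cadj P) (y ** Q ** cadj Q)"
    using assms by (simp add: matrix_mul_unitary_cadj)
  also have "\<dots> \<le> orbit_dist f (x ** P) (y ** Q)"
    using assms by (intro le unitary_mat_cadj)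
  finally have "orbit_dist f x y \<le> orbit_dist f (x ** P) (y ** Q)" .
  with le[OF assms, of x y] show ?thesis
    by linarith
qed

lemma orbit_dist_commute: "orbit_dist f x y = orbit_dist f y x"
proof -
  have le: "orbit_dist f y x \<le> orbit_dist f x y" for x y
  proof -
    obtain U where U: "unitary_mat U" "orbit_dist f x y = f x (y ** U)"
      using orbit_dist_attained .
    have "f y (x ** cadj U) = f (y ** U ** cadj U) (x ** cadj U)"
      using U(1) by (simp add: matrix_mul_unitary_cadj)
    also have "\<dots> = orbit_dist f x y"
      using U by (simp add: unitary_invariant unitary_mat_cadj commute)
    finally show ?thesis
      by (metis orbit_dist_le U(1) unitary_mat_cadj)
  qed
  show ?thesis
    using le[of x y] le[of y x] by simp
qed

lemma orbit_dist_triangle: "orbit_dist f x z \<le> orbit_dist f x y + orbit_dist f y z"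
proof -
  obtain U where U: "unitary_mat U" "orbit_dist f x y = f x (y ** U)"
    using orbit_dist_attained .
  obtain V where V: "unitary_mat V" "orbit_dist f y z = f y (z ** V)"
    using orbit_dist_attained .
  have "orbit_dist f x z \<le> f x (z ** (V ** U))"
    using U V by (intro orbit_dist_le unitary_mat_mult)
  also have "\<dots> \<le> f x (y ** U) + f (y ** U) (z ** V ** U)"
    by (simp add: matrix_mul_assoc triangle)
  also have "\<dots> = orbit_dist f x y + orbit_dist f y z"
    using U V by (simp add: unitary_invariant)
  finally show ?thesis .
qed

lemma orbit_dist_eq_0_iff: "orbit_dist f x y = 0 \<longleftrightarrow> uequiv x y"
proof
  assume "orbit_dist f x y = 0"
  then obtain U where "unitary_mat U" "f x (y ** U) = 0"
    by (metis orbit_dist_attained)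
  then obtain V where "unitary_mat V" "x = y ** U ** V"
    using eq_0_imp_uequiv unfolding uequiv_def by blast
  then show "uequiv x y"
    unfolding uequiv_def using \<open>unitary_mat U\<close>
    by (metis matrix_mul_assoc unitary_mat_mult)
next
  assume "uequiv x y"
  then obtain U where "unitary_mat U" "x = y ** U"
    unfolding uequiv_def by blast
  then have "orbit_dist f x y \<le> 0"
    using orbit_dist_le[of U x y] refl by simp
  then show "orbit_dist f x y = 0"
    using orbit_dist_nonneg by (simp add: order_antisym)
qed

lemma descends_to_metric_orbit_dist: "descends_to_metric (orbit_dist f)"
  unfolding descends_to_metric_def
proof (intro conjI allI impI)
  fix x x' y y' :: "complex^'r^'n"
  assume "uequiv x x' \<and> uequiv y y'"
  then obtain P Q where "unitary_mat P" "unitary_mat Q" "x = x' ** P" "y = y' ** Q"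
    unfolding uequiv_def by blast
  then show "orbit_dist f x y = orbit_dist f x' y'"
    by (simp add: orbit_dist_right_unitary)
qed (fact orbit_dist_nonneg orbit_dist_eq_0_iff orbit_dist_commute orbit_dist_triangle)+

end

lemma uequiv_refl: "uequiv x x"
  unfolding uequiv_def using unitary_mat_mat_1 by force

lemma uequiv_uminus: "uequiv (- x) x"
  unfolding uequiv_def using unitary_mat_neg_mat_1 matrix_mul_neg_mat_1 by metis

lemma unitarily_invariant_pseudometric_norm_diff:
  "unitarily_invariant_pseudometric (\<lambda>a b :: complex^'r^'n. norm (a - b))"
proof
  fix a b c :: "complex^'r^'n"
  show "continuous_on UNIV (\<lambda>b. norm (a - b))"
    by (intro continuous_intros)
  show "norm (a - b) = norm (b - a)"
    by (rule norm_minus_commute)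
  show "norm (a - c) \<le> norm (a - b) + norm (b - c)"
    using dist_triangle[of a c b] by (simp add: dist_norm)
  show "norm (a - b) = 0 \<Longrightarrow> uequiv a b"
    by (simp add: uequiv_refl)
next
  fix a b :: "complex^'r^'n" and P :: "complex^'r^'r"
  assume "unitary_mat P"
  then show "norm (a ** P - b ** P) = norm (a - b)"
    by (simp flip: matrix_diff_rdistrib add: norm_matrix_mul_unitary)
qed simp

lemma unitarily_invariant_pseudometric_norm_diff_mult_norm_add:
  "unitarily_invariant_pseudometric (\<lambda>a b :: complex^'r^'n. norm (a - b) * norm (a + b))"
proof
  fix a b c :: "complex^'r^'n"
  show "continuous_on UNIV (\<lambda>b. norm (a - b) * norm (a + b))"
    by (intro continuous_intros)
  show "norm (a - b) * norm (a + b) = norm (b - a) * norm (b + a)"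
    by (simp add: norm_minus_commute add.commute)
  show "norm (a - c) * norm (a + c) \<le> norm (a - b) * norm (a + b) + norm (b - c) * norm (b + c)"
    by (rule norm_diff_mult_norm_add_triangle)
  show "norm (a - b) * norm (a + b) = 0 \<Longrightarrow> uequiv a b"
    by (auto simp: uequiv_refl uequiv_uminus simp flip: eq_neg_iff_add_eq_0)
next
  fix a b :: "complex^'r^'n" and P :: "complex^'r^'r"
  assume "unitary_mat P"
  then show "norm (a ** P - b ** P) * norm (a ** P + b ** P) = norm (a - b) * norm (a + b)"
    by (simp flip: matrix_diff_rdistrib matrix_add_rdistrib add: norm_matrix_mul_unitary)
qed simp

lemma distD_eq_orbit_dist: "distD = orbit_dist (\<lambda>a b. norm (a - b))"
  by (simp add: fun_eq_iff distD_def orbit_dist_def frob_eq_norm)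

lemma distd_eq_orbit_dist: "distd = orbit_dist (\<lambda>a b. norm (a - b) * norm (a + b))"
  by (simp add: fun_eq_iff distd_def orbit_dist_def frob_eq_norm)

theorem proposition2p3:
  fixes D d :: "complex^'r^'n \<Rightarrow> complex^'r^'n \<Rightarrow> real"
  assumes "D = distD" and "d = distd"
  shows "(\<forall>x y. \<exists>U. unitary_mat U \<and> D x y = frob (x - y ** U)) \<and>
         (\<forall>x y. \<exists>U. unitary_mat U \<and> d x y = frob (x - y ** U) * frob (x + y ** U)) \<and>
         descends_to_metric D \<and> descends_to_metric d"
proof -
  interpret D: unitarily_invariant_pseudometric "\<lambda>a b :: complex^'r^'n. norm (a - b)"
    by (rule unitarily_invariant_pseudometric_norm_diff)
  interpret d: unitarily_invariant_pseudometric "\<lambda>a b :: complex^'r^'n. norm (a - b) * norm (a + b)"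
    by (rule unitarily_invariant_pseudometric_norm_diff_mult_norm_add)
  show ?thesis
    unfolding assms distD_eq_orbit_dist distd_eq_orbit_dist frob_eq_norm
    by (metis D.orbit_dist_attained d.orbit_dist_attained
        D.descends_to_metric_orbit_dist d.descends_to_metric_orbit_dist)
qed

end
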